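(* For $\tau\in(0,\tfrac1{3\sqrt3})$ and all $t\in\mathbb{R}$, $2\tau=y_\tau(t)\sqrt{1-y_\tau(t)}\,\cos\big(\psi_1(t)+2\psi_2(t)\big)$; moreover $\psi_1(t)+2\psi_2(t)\in(-\tfrac\pi2,\tfrac\pi2)$ for all $t$, and $\psi_1(p_\tau)+2\psi_2(p_\tau)=0$.
   Context: $y_\tau$ solves $\ddot y=-2y(3y-2)$, $y(0)=y_{\max}$, $\dot y(0)=0$, where $y_{\max}$ is the largest root of $y^3-y^2+4\tau^2$; it satisfies $\dot y^2=-4(y^3-y^2+4\tau^2)$, is even, and is periodic of period $2p_\tau$, attaining its minimum at $t=p_\tau$. $\psi_1,\psi_2$ solve $(1-y_\tau)\dot\psi_1=2\tau$, $y_\tau\dot\psi_2=-2\tau$, $\psi_1(0)=\psi_2(0)=0$. *)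

theory Defs
  imports Complex_Main
begin

definition is_ymax :: "real \<Rightarrow> real \<Rightarrow> bool" where
  "is_ymax \<tau> m \<longleftrightarrow> m^3 - m^2 + 4*\<tau>^2 = 0 \<and> (\<forall>r. r^3 - r^2 + 4*\<tau>^2 = 0 \<longrightarrow> r \<le> m)"

end

theory Submission
  imports Defs
begin

(* The energy y'^2 + 4 y^3 - 4 y^2 is conserved; as y(0) is a root of the cubic and y'(0) = 0,
   it equals -16 tau^2, i.e. y'^2 = 4 y^2 (1 - y) - 16 tau^2.  Since y psi2' = -2 tau, y never
   vanishes, and y(0) >= 2/3 because tau < 1/(3 sqrt 3), so 0 < y < 1 throughout.  On this
   energy level the phase psi1 + 2 psi2, with derivative 2 tau (3y - 2) / (y (1 - y)), has the
   same derivative as -arctan (y' / (4 tau)), and both vanish at 0.  Hence the phase lies in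
   (-pi/2, pi/2), its cosine is 1 / sqrt (1 + (y'/(4 tau))^2) = 2 tau / (y sqrt (1 - y)), and it
   vanishes wherever y' does, e.g. at the minimum p. *)

lemma sq_lt_one_twenty_seventh:
  fixes \<tau> :: real
  assumes "0 \<le> \<tau>" "\<tau> < 1 / (3 * sqrt 3)"
  shows "\<tau>^2 < 1/27"
proof -
  have "\<tau>^2 < (1 / (3 * sqrt 3))^2" using assms by (intro power_strict_mono) auto
  also have "\<dots> = 1/27" by (simp add: power2_eq_square field_simps)
  finally show ?thesis .
qed

lemma is_ymax_ge_two_thirds:
  assumes "\<tau>^2 \<le> 1/27" "is_ymax \<tau> m"
  shows "2/3 \<le> m"
proof -
  define f :: "real \<Rightarrow> real" where "f r = r^3 - r^2 + 4*\<tau>^2" for r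
  have "continuous_on {2/3..1} f" unfolding f_def by (intro continuous_intros)
  moreover have "f (2/3) \<le> 0" "0 \<le> f 1"
    using assms(1) by (auto simp: f_def power2_eq_square power3_eq_cube)
  ultimately obtain r where "2/3 \<le> r" "f r = 0"
    using IVT'[of f "2/3" 0 1] by auto
  then show ?thesis using assms(2) unfolding is_ymax_def f_def by force
qed

lemma energy_conserved:
  fixes y y' :: "real \<Rightarrow> real"
  assumes y_deriv: "\<And>t. (y has_real_derivative y' t) (at t)"
    and y'_deriv: "\<And>t. (y' has_real_derivative (-2 * y t * (3 * y t - 2))) (at t)"
  shows "(y' t)^2 + 4 * (y t)^3 - 4 * (y t)^2 = (y' s)^2 + 4 * (y s)^3 - 4 * (y s)^2"
proof -
  define E where "E t = (y' t)^2 + 4 * (y t)^3 - 4 * (y t)^2" for t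
  have "(E has_real_derivative 0) (at t)" for t
  proof -
    have "(E has_real_derivative
        2 * y' t * (-2 * y t * (3 * y t - 2)) + 4 * (3 * (y t)^2 * y' t) - 4 * (2 * y t * y' t)) (at t)"
      unfolding E_def[abs_def]
      by (rule derivative_eq_intros y_deriv y'_deriv refl | simp)+
    then show ?thesis by (simp add: algebra_simps power2_eq_square)
  qed
  then have "E t = E s" using DERIV_isconst_all by blast
  then show ?thesis unfolding E_def .
qed

lemma continuous_nonvanishing_pos:
  fixes f :: "real \<Rightarrow> real"
  assumes "continuous_on UNIV f" "\<And>t. f t \<noteq> 0" "0 < f a"
  shows "0 < f b"
proof (rule ccontr)
  assume "\<not> 0 < f b"
  then have "f b \<le> 0" by simp
  then obtain x where "f x = 0"
    using IVT'[of f b 0 a] IVT2'[of f b 0 a] assms(1,3)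
    by (cases "b \<le> a") (auto intro: continuous_on_subset)
  then show False using assms(2) by blast
qed

lemma one_plus_sq_on_energy_level:
  fixes \<tau> y v :: real
  assumes "0 < \<tau>" "v^2 = 4 * y^2 * (1 - y) - 16 * \<tau>^2"
  shows "1 + (v / (4 * \<tau>))^2 = y^2 * (1 - y) / (4 * \<tau>^2)"
  using assms(1) unfolding power_divide assms(2) by (simp add: field_simps)

lemma energy_level_lt_one:
  fixes \<tau> y v :: real
  assumes "0 < \<tau>" "v^2 = 4 * y^2 * (1 - y) - 16 * \<tau>^2"
  shows "y < 1"
proof -
  have "0 < 16 * \<tau>^2" using assms(1) by simp
  also have "\<dots> \<le> 4 * y^2 * (1 - y)" using assms(2) zero_le_power2[of v] by linarith
  finally have "0 < (1 - y) * y^2" by (simp add: mult.commute)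
  then show ?thesis by (simp add: zero_less_mult_iff)
qed

lemma phase_derivative_identity:
  fixes \<tau> y v :: real
  assumes "0 < \<tau>" "0 < y" "y < 1" "v^2 = 4 * y^2 * (1 - y) - 16 * \<tau>^2"
  shows "2 * \<tau> / (1 - y) - 4 * \<tau> / y
    = - (inverse (1 + (v / (4 * \<tau>))^2) * ((-2 * y * (3 * y - 2)) / (4 * \<tau>)))"
  unfolding one_plus_sq_on_energy_level[OF assms(1,4)] using assms(1-3)
  by (simp add: field_simps power2_eq_square)

lemma amplitude_cos_arctan:
  fixes \<tau> y v :: real
  assumes "0 < \<tau>" "0 < y" "v^2 = 4 * y^2 * (1 - y) - 16 * \<tau>^2"
  shows "y * sqrt (1 - y) * cos (arctan (v / (4 * \<tau>))) = 2 * \<tau>"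
proof -
  have "1 - y > 0" using energy_level_lt_one[OF assms(1,3)] by simp
  then have "1 + (v / (4 * \<tau>))^2 = (y * sqrt (1 - y) / (2 * \<tau>))^2"
    unfolding one_plus_sq_on_energy_level[OF assms(1,3)] by (simp add: power_mult_distrib power_divide)
  moreover have "0 < y * sqrt (1 - y)" using assms(2) \<open>1 - y > 0\<close> by simp
  ultimately show ?thesis using assms(1,2) \<open>1 - y > 0\<close> by (simp add: cos_arctan)
qed

lemma phase_eq_neg_arctan:
  fixes \<tau> :: real and y y' \<psi>1 \<psi>2 \<psi>1' \<psi>2' :: "real \<Rightarrow> real"
  assumes tau: "0 < \<tau>"
    and y'_deriv: "\<And>t. (y' has_real_derivative (-2 * y t * (3 * y t - 2))) (at t)"
    and energy: "\<And>t. (y' t)^2 = 4 * (y t)^2 * (1 - y t) - 16 * \<tau>^2"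
    and y_pos: "\<And>t. 0 < y t"
    and psi1_deriv: "\<And>t. (\<psi>1 has_real_derivative \<psi>1' t) (at t)"
    and psi1_eq: "\<And>t. (1 - y t) * \<psi>1' t = 2 * \<tau>"
    and psi2_deriv: "\<And>t. (\<psi>2 has_real_derivative \<psi>2' t) (at t)"
    and psi2_eq: "\<And>t. y t * \<psi>2' t = - 2 * \<tau>"
    and init: "\<psi>1 0 + 2 * \<psi>2 0 = - arctan (y' 0 / (4 * \<tau>))"
  shows "\<psi>1 t + 2 * \<psi>2 t = - arctan (y' t / (4 * \<tau>))"
proof -
  define \<phi> where "\<phi> t = - arctan (y' t / (4 * \<tau>))" for t
  have y_lt1: "y t < 1" for t using energy_level_lt_one[OF tau energy] .
  have "((\<lambda>t. \<psi>1 t + 2 * \<psi>2 t - \<phi> t) has_real_derivative 0) (at t)" for t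
  proof -
    have "(\<phi> has_real_derivative
        - (inverse (1 + (y' t / (4 * \<tau>))^2) * ((-2 * y t * (3 * y t - 2)) / (4 * \<tau>)))) (at t)"
      unfolding \<phi>_def[abs_def]
      by (rule DERIV_minus DERIV_chain2[OF DERIV_arctan] DERIV_cdivide y'_deriv)+
    then have "(\<phi> has_real_derivative 2 * \<tau> / (1 - y t) - 4 * \<tau> / y t) (at t)"
      unfolding phase_derivative_identity[OF tau y_pos y_lt1 energy] .
    then have "((\<lambda>t. \<psi>1 t + 2 * \<psi>2 t - \<phi> t) has_real_derivative
        \<psi>1' t + 2 * \<psi>2' t - (2 * \<tau> / (1 - y t) - 4 * \<tau> / y t)) (at t)"
      by (intro DERIV_diff DERIV_add DERIV_cmult psi1_deriv psi2_deriv)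
    moreover have "\<psi>1' t = 2 * \<tau> / (1 - y t)" "\<psi>2' t = - 2 * \<tau> / y t"
      using psi1_eq[of t] psi2_eq[of t] y_pos[of t] y_lt1[of t] by (simp_all add: field_simps)
    ultimately show ?thesis by simp
  qed
  then have "\<psi>1 t + 2 * \<psi>2 t - \<phi> t = \<psi>1 0 + 2 * \<psi>2 0 - \<phi> 0"
    using DERIV_isconst_all[of "\<lambda>t. \<psi>1 t + 2 * \<psi>2 t - \<phi> t"] by blast
  then show ?thesis using init by (simp add: \<phi>_def)
qed

theorem mainTheorem7:
  fixes \<tau> p :: real and y y' \<psi>1 \<psi>2 \<psi>1' \<psi>2' :: "real \<Rightarrow> real"
  assumes tau: "0 < \<tau>" "\<tau> < 1 / (3 * sqrt 3)"
    and y_deriv: "\<And>t. (y has_real_derivative y' t) (at t)"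
    and y'_deriv: "\<And>t. (y' has_real_derivative (-2 * y t * (3 * y t - 2))) (at t)"
    and y_init: "is_ymax \<tau> (y 0)" "y' 0 = 0"
    and psi1_deriv: "\<And>t. (\<psi>1 has_real_derivative \<psi>1' t) (at t)"
    and psi1_eq: "\<And>t. (1 - y t) * \<psi>1' t = 2 * \<tau>"
    and psi2_deriv: "\<And>t. (\<psi>2 has_real_derivative \<psi>2' t) (at t)"
    and psi2_eq: "\<And>t. y t * \<psi>2' t = - 2 * \<tau>"
    and psi_init: "\<psi>1 0 = 0" "\<psi>2 0 = 0"
    and p_pos: "0 < p"
    and p_period: "\<And>t. y (t + 2 * p) = y t"
    and p_minimal: "\<And>q. 0 < q \<Longrightarrow> q < 2 * p \<Longrightarrow> \<not> (\<forall>t. y (t + q) = y t)"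
    and p_min: "\<And>t. y p \<le> y t"
  shows "(\<forall>t. 2 * \<tau> = y t * sqrt (1 - y t) * cos (\<psi>1 t + 2 * \<psi>2 t))
       \<and> (\<forall>t. \<psi>1 t + 2 * \<psi>2 t \<in> {- pi / 2 <..< pi / 2})
       \<and> \<psi>1 p + 2 * \<psi>2 p = 0"
proof -
  have energy: "(y' t)^2 = 4 * (y t)^2 * (1 - y t) - 16 * \<tau>^2" for t
    using energy_conserved[OF y_deriv y'_deriv, of t 0] y_init
    by (simp add: is_ymax_def algebra_simps power2_eq_square power3_eq_cube)
  have y_pos: "0 < y t" for t
  proof (rule continuous_nonvanishing_pos[where f = y])
    show "continuous_on UNIV y"
      using y_deriv by (meson DERIV_isCont continuous_at_imp_continuous_on)
    show "y s \<noteq> 0" for s using psi2_eq[of s] tau(1) by auto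
    show "0 < y 0"
      using is_ymax_ge_two_thirds[OF _ y_init(1)] sq_lt_one_twenty_seventh[OF _ tau(2)] tau(1)
      by fastforce
  qed
  have phase: "\<psi>1 t + 2 * \<psi>2 t = - arctan (y' t / (4 * \<tau>))" for t
    using phase_eq_neg_arctan[OF tau(1) y'_deriv energy y_pos psi1_deriv psi1_eq psi2_deriv psi2_eq]
      psi_init y_init(2) by simp
  show ?thesis
  proof (intro conjI allI)
    show "2 * \<tau> = y t * sqrt (1 - y t) * cos (\<psi>1 t + 2 * \<psi>2 t)" for t
      using phase[of t] amplitude_cos_arctan[OF tau(1) y_pos energy] by simp
    show "\<psi>1 t + 2 * \<psi>2 t \<in> {- pi / 2 <..< pi / 2}" for t
      using phase[of t] arctan_bounded[of "y' t / (4 * \<tau>)"] by auto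
    have "y' p = 0"
      by (rule DERIV_local_min[OF y_deriv, of 1]) (auto simp: p_min)
    then show "\<psi>1 p + 2 * \<psi>2 p = 0" using phase[of p] by simp
  qed
qed

end
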